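(* Let $n\ge1$ and let $S=(s_I)_{I\subseteq[n]}\in(\mathbb{R}_{>0})^{2^n}$ with $s_\emptyset=1$ be a molecule given in $s$-coordinates. Identify $S$ with the tensor in $(\mathbb{R}^2)^{\otimes n}$ whose entry at $\varepsilon\in\{0,1\}^n$ is $s_{\{i:\varepsilon_i=1\}}$, and suppose this tensor has positive rank $k$. Then there exist weights $\lambda_1,\dots,\lambda_k>0$ with $\sum_j\lambda_j=1$ and molecules $S^{(1)},\dots,S^{(k)}$ with $n$ independent sites such that $S=\sum_{j=1}^k\lambda_j S^{(j)}$ (entrywise); in particular the binding polynomial of $S$ equals $\sum_{j=1}^k\lambda_j$ times the binding polynomial of $S^{(j)}$, i.e. the corresponding mixture of the $k$ molecules has the same binding curve as $S$. Moreover, $S$ cannot be written in this way using only $k-1$ molecules with $n$ independent sites.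
   Context: A molecule with $n$ sites is $W=(w_I)_{I\subseteq[n]}\in(\mathbb{R}_{>0})^{2^n}$ with $w_\emptyset=1$; its $s$-coordinates are $s_I=\prod_{I'\subseteq I}w_{I'}$ (a bijection of $(\mathbb{R}_{>0})^{2^n}$ onto itself, with $s_\emptyset=1$). The binding polynomial is $\sum_{k=0}^n a_k\Lambda^k$ with $a_k=\sum_{|I|=k}s_I$. A molecule has $n$ independent sites if $w_I=1$ for all $|I|>1$, equivalently $s_I=\prod_{i\in I}s_i$ for all $I$. A (positive) rank-one tensor is $v_1\otimes\dots\otimes v_n$ with $v_i=(s_i,t_i)\in(\mathbb{R}_{>0})^2$, whose entry at $\varepsilon\in\{0,1\}^n$ is $\prod_{i:\varepsilon_i=1}s_i\prod_{i:\varepsilon_i=0}t_i$; the positive rank of a tensor is the least number of such positive rank-one tensors summing to it. *)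

theory Defs
  imports Main "HOL-Computational_Algebra.Polynomial"
begin

text \<open>A molecule in s-coordinates is a function
  s :: nat set => real on the subsets of [n]; the tensor identified with it has entry
  s {i. eps_i = 1} at eps, so tensor entries are indexed by subsets I of [n].\<close>

definition sites :: "nat \<Rightarrow> nat set" where
  "sites n = {1..n}"

definition molecule_s :: "nat \<Rightarrow> (nat set \<Rightarrow> real) \<Rightarrow> bool" where
  "molecule_s n s \<longleftrightarrow> s {} = 1 \<and> (\<forall>I. I \<subseteq> sites n \<longrightarrow> s I > 0)"

definition indep_sites :: "nat \<Rightarrow> (nat set \<Rightarrow> real) \<Rightarrow> bool" where
  "indep_sites n s \<longleftrightarrow> molecule_s n s \<and>
     (\<forall>I. I \<subseteq> sites n \<longrightarrow> s I = (\<Prod>i\<in>I. s {i}))"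

text \<open>Entry at I (i.e. at eps with eps_i = 1 iff i in I) of the positive rank-one tensor
  v_1 x ... x v_n with v_i = (a i, b i).\<close>
definition rank_one :: "nat \<Rightarrow> (nat \<Rightarrow> real) \<Rightarrow> (nat \<Rightarrow> real) \<Rightarrow> nat set \<Rightarrow> real" where
  "rank_one n a b I = (\<Prod>i\<in>I. a i) * (\<Prod>i\<in>sites n - I. b i)"

definition pos_decomp :: "nat \<Rightarrow> (nat set \<Rightarrow> real) \<Rightarrow> nat \<Rightarrow> bool" where
  "pos_decomp n T k \<longleftrightarrow> (\<exists>a b :: nat \<Rightarrow> nat \<Rightarrow> real.
     (\<forall>j<k. \<forall>i\<in>sites n. a j i > 0 \<and> b j i > 0) \<and>
     (\<forall>I. I \<subseteq> sites n \<longrightarrow> T I = (\<Sum>j<k. rank_one n (a j) (b j) I)))"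

definition has_pos_rank :: "nat \<Rightarrow> (nat set \<Rightarrow> real) \<Rightarrow> nat \<Rightarrow> bool" where
  "has_pos_rank n T k \<longleftrightarrow> pos_decomp n T k \<and> (\<forall>k'<k. \<not> pos_decomp n T k')"

definition binding_coeff :: "nat \<Rightarrow> (nat set \<Rightarrow> real) \<Rightarrow> nat \<Rightarrow> real" where
  "binding_coeff n s m = (\<Sum>I\<in>{I. I \<subseteq> sites n \<and> card I = m}. s I)"

definition binding_poly :: "nat \<Rightarrow> (nat set \<Rightarrow> real) \<Rightarrow> real poly" where
  "binding_poly n s = (\<Sum>m\<le>n. monom (binding_coeff n s m) m)"

definition indep_mixture ::
  "nat \<Rightarrow> (nat set \<Rightarrow> real) \<Rightarrow> nat \<Rightarrow> (nat \<Rightarrow> real) \<Rightarrow> (nat \<Rightarrow> nat set \<Rightarrow> real) \<Rightarrow> bool" where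
  "indep_mixture n s k lam S \<longleftrightarrow>
     (\<forall>j<k. lam j > 0) \<and> (\<Sum>j<k. lam j) = 1 \<and> (\<forall>j<k. indep_sites n (S j)) \<and>
     (\<forall>I. I \<subseteq> sites n \<longrightarrow> s I = (\<Sum>j<k. lam j * S j I))"

end

theory Submission
  imports Defs
begin

text \<open>The positive rank-one tensor with factors \<open>(a i, b i)\<close> is the positive number
  \<open>\<Prod>i. b i\<close> times the molecule with independent sites whose site constants are
  \<open>a i / b i\<close>; conversely, \<open>c\<close> times a molecule with independent sites is the positive
  rank-one tensor obtained by putting a factor \<open>root n c\<close> on every site. So decompositions
  into \<open>k\<close> positive rank-one tensors and mixtures of \<open>k\<close> molecules with independent sites
  correspond to each other, and the weights sum to \<open>s {} = 1\<close>.\<close>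

lemma finite_sites [simp]: "finite (sites n)"
  by (simp add: sites_def)

lemma prod_sites_split:
  assumes "I \<subseteq> sites n"
  shows "(\<Prod>i\<in>sites n. f i) = (\<Prod>i\<in>I. f i) * (\<Prod>i\<in>sites n - I. f i :: 'a :: comm_monoid_mult)"
  using prod.subset_diff[OF assms finite_sites] by (simp add: mult.commute)

lemma indep_sites_prod:
  assumes "\<forall>i\<in>sites n. x i > 0"
  shows "indep_sites n (\<lambda>I. \<Prod>i\<in>I. x i)"
proof -
  have "(\<Prod>i\<in>I. x i) > 0" if "I \<subseteq> sites n" for I
    using assms that by (intro prod_pos) blast
  then show ?thesis
    unfolding indep_sites_def molecule_s_def by simp
qed

lemma rank_one_eq_scaled_indep:
  assumes "\<forall>i\<in>sites n. b i \<noteq> 0" and "I \<subseteq> sites n"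
  shows "rank_one n a b I = (\<Prod>i\<in>sites n. b i) * (\<Prod>i\<in>I. a i / b i)"
proof -
  have "(\<Prod>i\<in>I. a i) = (\<Prod>i\<in>I. b i) * (\<Prod>i\<in>I. a i / b i)"
    unfolding prod.distrib[symmetric] using assms by (intro prod.cong) (auto dest!: subsetD)
  then show ?thesis
    unfolding rank_one_def prod_sites_split[OF assms(2), of b] by (simp add: algebra_simps)
qed

lemma scaled_indep_eq_rank_one:
  assumes "n \<ge> 1" and "c > 0" and "indep_sites n T" and "I \<subseteq> sites n"
  shows "c * T I = rank_one n (\<lambda>i. root n c * T {i}) (\<lambda>_. root n c) I"
proof -
  have "T I = (\<Prod>i\<in>I. T {i})"
    using assms(3,4) unfolding indep_sites_def by blast
  moreover have "(\<Prod>i\<in>sites n. root n c) = c"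
    using assms(1,2) by (simp add: sites_def)
  ultimately show ?thesis
    unfolding rank_one_def prod.distrib prod_sites_split[OF assms(4), of "\<lambda>_. root n c"]
    by (simp add: algebra_simps)
qed

lemma pos_decomp_imp_indep_mixture:
  assumes "molecule_s n s" and "pos_decomp n s k"
  shows "\<exists>lam S. indep_mixture n s k lam S"
proof -
  obtain a b where pos: "\<forall>j<k. \<forall>i\<in>sites n. a j i > 0 \<and> b j i > 0"
    and decomp: "\<forall>I \<subseteq> sites n. s I = (\<Sum>j<k. rank_one n (a j) (b j) I)"
    using assms(2) unfolding pos_decomp_def by blast
  define lam where "lam j = (\<Prod>i\<in>sites n. b j i)" for j
  define S where "S j I = (\<Prod>i\<in>I. a j i / b j i)" for j I
  have lam_pos: "\<forall>j<k. lam j > 0"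
    using pos unfolding lam_def by (auto intro!: prod_pos)
  have indep: "\<forall>j<k. indep_sites n (S j)"
    using pos unfolding S_def by (auto intro!: indep_sites_prod)
  have "rank_one n (a j) (b j) I = lam j * S j I" if "j < k" and "I \<subseteq> sites n" for j I
    unfolding lam_def S_def using pos that by (intro rank_one_eq_scaled_indep) force+
  with decomp have mix: "\<forall>I \<subseteq> sites n. s I = (\<Sum>j<k. lam j * S j I)"
    by simp
  have "(\<Sum>j<k. lam j) = (\<Sum>j<k. lam j * S j {})"
    by (simp add: S_def)
  also have "\<dots> = 1"
    using mix assms(1) unfolding molecule_s_def by simp
  finally show ?thesis
    using lam_pos indep mix unfolding indep_mixture_def by blast
qed

lemma indep_mixture_imp_pos_decomp:
  assumes "n \<ge> 1" and "indep_mixture n s k lam S"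
  shows "pos_decomp n s k"
proof -
  have lam_pos: "\<forall>j<k. lam j > 0" and indep: "\<forall>j<k. indep_sites n (S j)"
    and mix: "\<forall>I \<subseteq> sites n. s I = (\<Sum>j<k. lam j * S j I)"
    using assms(2) unfolding indep_mixture_def by auto
  define a where "a j = (\<lambda>i. root n (lam j) * S j {i})" for j
  define b where "b j = (\<lambda>_ :: nat. root n (lam j))" for j
  have "S j {i} > 0" if "j < k" and "i \<in> sites n" for j i
    using indep that unfolding indep_sites_def molecule_s_def by blast
  then have pos: "\<forall>j<k. \<forall>i\<in>sites n. a j i > 0 \<and> b j i > 0"
    using lam_pos assms(1) unfolding a_def b_def by simp
  have "lam j * S j I = rank_one n (a j) (b j) I" if "j < k" and "I \<subseteq> sites n" for j I
    unfolding a_def b_def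
    by (rule scaled_indep_eq_rank_one[OF assms(1)]) (use lam_pos indep that in auto)
  with mix have "\<forall>I \<subseteq> sites n. s I = (\<Sum>j<k. rank_one n (a j) (b j) I)"
    by simp
  with pos show ?thesis
    unfolding pos_decomp_def by blast
qed

lemma not_pos_decomp_zero:
  assumes "molecule_s n s"
  shows "\<not> pos_decomp n s 0"
proof
  assume "pos_decomp n s 0"
  then have "s {} = 0"
    unfolding pos_decomp_def by auto
  with assms show False
    unfolding molecule_s_def by simp
qed

lemma smult_sum_right: "smult c (\<Sum>x\<in>A. f x) = (\<Sum>x\<in>A. smult c (f x))"
  by (induction A rule: infinite_finite_induct) (simp_all add: smult_add_right)

lemma binding_poly_linear:
  assumes "\<forall>I \<subseteq> sites n. s I = (\<Sum>j\<in>J. c j * t j I)"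
  shows "binding_poly n s = (\<Sum>j\<in>J. smult (c j) (binding_poly n (t j)))"
proof -
  have coeff: "binding_coeff n s m = (\<Sum>j\<in>J. c j * binding_coeff n (t j) m)" for m
  proof -
    have "binding_coeff n s m = (\<Sum>I\<in>{I. I \<subseteq> sites n \<and> card I = m}. \<Sum>j\<in>J. c j * t j I)"
      unfolding binding_coeff_def using assms by (intro sum.cong) auto
    also have "\<dots> = (\<Sum>j\<in>J. c j * binding_coeff n (t j) m)"
      unfolding binding_coeff_def sum_distrib_left by (rule sum.swap)
    finally show ?thesis .
  qed
  have "binding_poly n s = (\<Sum>m\<le>n. \<Sum>j\<in>J. monom (c j * binding_coeff n (t j) m) m)"
    unfolding binding_poly_def coeff by (simp add: monom_sum)
  also have "\<dots> = (\<Sum>j\<in>J. \<Sum>m\<le>n. smult (c j) (monom (binding_coeff n (t j) m) m))"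
    by (subst sum.swap) (simp add: smult_monom)
  also have "\<dots> = (\<Sum>j\<in>J. smult (c j) (binding_poly n (t j)))"
    unfolding binding_poly_def by (simp add: smult_sum_right)
  finally show ?thesis .
qed

theorem mainTheorem2:
  fixes n k :: nat and s :: "nat set \<Rightarrow> real"
  assumes "n \<ge> 1"
    and "molecule_s n s"
    and "has_pos_rank n s k"
  shows "(\<exists>lam S. indep_mixture n s k lam S \<and>
            binding_poly n s = (\<Sum>j<k. smult (lam j) (binding_poly n (S j))))
         \<and> \<not> (\<exists>lam S. indep_mixture n s (k - 1) lam S)"
proof
  have decomp: "pos_decomp n s k" and minimal: "\<forall>k'<k. \<not> pos_decomp n s k'"
    using assms(3) unfolding has_pos_rank_def by auto
  obtain lam S where mixture: "indep_mixture n s k lam S"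
    using pos_decomp_imp_indep_mixture[OF assms(2) decomp] by blast
  moreover have "binding_poly n s = (\<Sum>j<k. smult (lam j) (binding_poly n (S j)))"
    using mixture unfolding indep_mixture_def by (intro binding_poly_linear) blast
  ultimately show "\<exists>lam S. indep_mixture n s k lam S \<and>
      binding_poly n s = (\<Sum>j<k. smult (lam j) (binding_poly n (S j)))"
    by blast
  have "k > 0"
    using decomp not_pos_decomp_zero[OF assms(2)] by (cases k) auto
  then show "\<not> (\<exists>lam S. indep_mixture n s (k - 1) lam S)"
    using minimal indep_mixture_imp_pos_decomp[OF assms(1)] by (meson diff_less zero_less_one)
qed

end
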